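(* Let $d\ge5$ and $(z_i)_{i\ge1}$ be points in $\mathbb{R}^d$. Let $(X^i_t)_{t\ge0}$, $i\ge1$, be independent Brownian motions on $\mathbb{R}^d$ with $X^i_0=z_i$, with joint expectation $E$. For $z\in\mathbb{R}^d$ let $f_z=1_{B(z,1)}$, and for $L>0$ and indices $i,j$ set $$F_L(i,j)=\int_{L/2}^L\int_{L/2}^L\int_{\mathbb{R}^d\times\mathbb{R}^d}g(x,y)f_{X^i_s}(x)f_{X^j_t}(y)\,dx\,dy\,ds\,dt.$$ Then there is $C=C(d)$ such that for all positive integers $M$ and all $L\ge2$, $$E\Big[\sum_{i,j=1}^M F_L(i,j)\Big]\le C(ML+M^2L^{3-d/2}).$$
   Context: $g(x,y)=\int_0^\infty(2\pi t)^{-d/2}e^{-|x-y|^2/(2t)}dt$ is the Green function of Brownian motion; $B(z,1)$ is the closed Euclidean ball. *)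

theory Defs
  imports "HOL-Probability.Probability"
begin

definition heat_kernel :: "real \<Rightarrow> real ^ 'd \<Rightarrow> real" where
  "heat_kernel h x = (2 * pi * h) powr (- real CARD('d) / 2) * exp (- (norm x)\<^sup>2 / (2 * h))"

definition green :: "real ^ 'd \<Rightarrow> real ^ 'd \<Rightarrow> ennreal" where
  "green x y = (\<integral>\<^sup>+ t. ennreal (heat_kernel t (x - y)) * indicator {0<..} t \<partial>lborel)"

definition brownian_motion :: "'a measure \<Rightarrow> (real \<Rightarrow> 'a \<Rightarrow> real ^ 'd) \<Rightarrow> real ^ 'd \<Rightarrow> bool" where
  "brownian_motion P X z \<longleftrightarrow>
     (\<forall>t. X t \<in> borel_measurable P) \<and>
     (\<forall>\<omega>\<in>space P. X 0 \<omega> = z) \<and>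
     (\<forall>\<omega>\<in>space P. continuous_on {0..} (\<lambda>t. X t \<omega>)) \<and>
     (\<forall>(s::nat \<Rightarrow> real) n. strict_mono s \<and> 0 \<le> s 0 \<longrightarrow>
        prob_space.indep_vars P (\<lambda>_. borel) (\<lambda>k \<omega>. X (s (Suc k)) \<omega> - X (s k) \<omega>) {..<n}) \<and>
     (\<forall>s t. 0 \<le> s \<and> s < t \<longrightarrow>
        distributed P lborel (\<lambda>\<omega>. X t \<omega> - X s \<omega>) (\<lambda>x. ennreal (heat_kernel (t - s) x)))"

definition F_L :: "(nat \<Rightarrow> real \<Rightarrow> 'a \<Rightarrow> real ^ 'd) \<Rightarrow> real \<Rightarrow> nat \<Rightarrow> nat \<Rightarrow> 'a \<Rightarrow> ennreal" where
  "F_L X L i j \<omega> =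
     (\<integral>\<^sup>+ t. (\<integral>\<^sup>+ s. (\<integral>\<^sup>+ y. (\<integral>\<^sup>+ x.
        green x y * indicator (cball (X i s \<omega>) 1) x * indicator (cball (X j t \<omega>) 1) y
        \<partial>lborel) \<partial>lborel) * indicator {L/2..L} s \<partial>lborel) * indicator {L/2..L} t \<partial>lborel)"

end

theory Submission
  imports Defs
begin

text \<open>
  Write E(a, b) for the Green energy between the unit balls around a and b (\<open>ball_energy a b\<close>),
  so that the expectation of F_L(i, j) is the integral over [L/2, L]^2 of the expectation of
  E(X^i_s, X^j_t). E(a, b) depends only on b - a. Averaging E(0, w) against a probability density
  q <= B moves q onto psi = q * 1_B(0,1), which is bounded by min 1 (B |B_1|) and has mass |B_1|;
  writing the Green function as a time integral of heat kernels then bounds the average by |B_1|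
  times the integral over t > 0 of min (min 1 (B |B_1|)) (|B_1| (2 pi t)^(-d/2)). For a Gaussian
  density of variance sigma this is O(min 1 (sigma^(1 - d/2))).

  On the diagonal X^i_t - X^i_s is Gaussian of variance |t - s|, and |t - s|^(1 - d/2) is integrable
  at infinity because d >= 5; this gives O(L) for each i. Off the diagonal, independence lets us
  condition on X^j_t, while X^i_s is Gaussian of variance s >= L/2 around its starting point; this
  gives O((L/2)^(1 - d/2)) on a square of area (L/2)^2.
\<close>

lemma le_ennreal_min: "x \<le> ennreal a \<Longrightarrow> x \<le> ennreal b \<Longrightarrow> x \<le> ennreal (min a b)"
  by (cases "a \<le> b") (auto simp: min_def)

lemma norm_power2_eq_sum_Basis: "(norm x)\<^sup>2 = (\<Sum>b\<in>Basis. (x \<bullet> b)\<^sup>2)"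
  for x :: "'a::euclidean_space"
  unfolding power2_norm_eq_inner by (subst euclidean_inner) (simp add: power2_eq_square)

lemma sum_sum_diagonal_le:
  fixes f :: "'i \<Rightarrow> 'i \<Rightarrow> ennreal"
  assumes "finite I" and "0 \<le> a" and "0 \<le> b"
    and f_le: "\<And>i j. i \<in> I \<Longrightarrow> j \<in> I \<Longrightarrow> f i j \<le> ennreal ((if i = j then a else 0) + b)"
  shows "(\<Sum>i\<in>I. \<Sum>j\<in>I. f i j) \<le> ennreal (real (card I) * a + (real (card I))\<^sup>2 * b)"
proof -
  have "(\<Sum>i\<in>I. \<Sum>j\<in>I. f i j) \<le> (\<Sum>i\<in>I. \<Sum>j\<in>I. ennreal ((if i = j then a else 0) + b))"
    by (intro sum_mono f_le)
  also have "\<dots> = ennreal (\<Sum>i\<in>I. \<Sum>j\<in>I. (if i = j then a else 0) + b)"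
    using assms by (simp add: sum_ennreal sum_nonneg del: ennreal_plus)
  also have "(\<Sum>i\<in>I. \<Sum>j\<in>I. (if i = j then a else 0) + b) = real (card I) * a + (real (card I))\<^sup>2 * b"
    using \<open>finite I\<close> by (simp add: sum.distrib power2_eq_square algebra_simps)
  finally show ?thesis .
qed

lemma nn_integral_lborel_affine_unimodular:
  fixes f :: "'a::euclidean_space \<Rightarrow> ennreal"
  assumes [measurable]: "f \<in> borel_measurable borel" and "\<bar>a\<bar> = 1"
  shows "(\<integral>\<^sup>+x. f (c + a *\<^sub>R x) \<partial>lborel) = (\<integral>\<^sup>+x. f x \<partial>lborel)"
  using assms(2)
  by (subst (2) lborel_affine[of a c]) (auto simp: nn_integral_density nn_integral_distr)

lemma nn_integral_lborel_translate:
  fixes f :: "'a::euclidean_space \<Rightarrow> ennreal"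
  assumes "f \<in> borel_measurable borel"
  shows "(\<integral>\<^sup>+x. f (c + x) \<partial>lborel) = (\<integral>\<^sup>+x. f x \<partial>lborel)"
  using nn_integral_lborel_affine_unimodular[OF assms, of 1 c] by simp

lemma nn_integral_lborel_reflect:
  fixes f :: "'a::euclidean_space \<Rightarrow> ennreal"
  assumes "f \<in> borel_measurable borel"
  shows "(\<integral>\<^sup>+x. f (c - x) \<partial>lborel) = (\<integral>\<^sup>+x. f x \<partial>lborel)"
  using nn_integral_lborel_affine_unimodular[OF assms, of "-1" c] by simp

lemma (in prob_space) nn_integral_indep_var_le:
  assumes XY: "indep_var M\<^sub>1 X M\<^sub>2 Y"
    and f[measurable]: "case_prod f \<in> borel_measurable (M\<^sub>1 \<Otimes>\<^sub>M M\<^sub>2)"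
    and f_le: "\<And>y. y \<in> space M\<^sub>2 \<Longrightarrow> (\<integral>\<^sup>+\<omega>. f (X \<omega>) y \<partial>M) \<le> K"
  shows "(\<integral>\<^sup>+\<omega>. f (X \<omega>) (Y \<omega>) \<partial>M) \<le> K"
proof -
  have [measurable]: "X \<in> measurable M M\<^sub>1" "Y \<in> measurable M M\<^sub>2"
    using indep_var_rv1[OF XY] indep_var_rv2[OF XY] by auto
  have joint: "distr M M\<^sub>1 X \<Otimes>\<^sub>M distr M M\<^sub>2 Y = distr M (M\<^sub>1 \<Otimes>\<^sub>M M\<^sub>2) (\<lambda>\<omega>. (X \<omega>, Y \<omega>))"
    using XY unfolding indep_var_distribution_eq by auto
  interpret X: prob_space "distr M M\<^sub>1 X" by (rule prob_space_distr) simp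
  interpret Y: prob_space "distr M M\<^sub>2 Y" by (rule prob_space_distr) simp
  interpret XY: pair_sigma_finite "distr M M\<^sub>1 X" "distr M M\<^sub>2 Y" ..
  have "(\<integral>\<^sup>+\<omega>. f (X \<omega>) (Y \<omega>) \<partial>M) = (\<integral>\<^sup>+p. case_prod f p \<partial>(distr M M\<^sub>1 X \<Otimes>\<^sub>M distr M M\<^sub>2 Y))"
    unfolding joint by (subst nn_integral_distr) auto
  also have "\<dots> = (\<integral>\<^sup>+y. (\<integral>\<^sup>+x. f x y \<partial>distr M M\<^sub>1 X) \<partial>distr M M\<^sub>2 Y)"
    by (subst XY.nn_integral_snd[symmetric]) auto
  also have "\<dots> \<le> (\<integral>\<^sup>+y. K \<partial>distr M M\<^sub>2 Y)"
  proof (intro nn_integral_mono)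
    fix y assume "y \<in> space (distr M M\<^sub>2 Y)"
    then have y: "y \<in> space M\<^sub>2" by simp
    have "(\<lambda>x. f x y) \<in> borel_measurable M\<^sub>1"
      using measurable_Pair_compose_split[OF f measurable_ident_sets[OF refl] measurable_const[OF y]] by simp
    then show "(\<integral>\<^sup>+x. f x y \<partial>distr M M\<^sub>1 X) \<le> K"
      by (simp add: nn_integral_distr f_le[OF y])
  qed
  also have "\<dots> = K"
    using Y.emeasure_space_1 by simp
  finally show ?thesis .
qed

section \<open>The heat kernel and the Green function\<close>

lemma heat_kernel_eq_prod_normal_density:
  fixes x :: "real^'d"
  assumes "0 < t"
  shows "heat_kernel t x = (\<Prod>b\<in>Basis. normal_density 0 (sqrt t) (x \<bullet> b))"
proof -
  have "(2 * pi * t) powr (- real CARD('d) / 2) = ((2 * pi * t) powr (- 1 / 2)) powr real (CARD('d))"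
    by (simp add: powr_powr)
  also have "\<dots> = (1 / sqrt (2 * pi * t)) ^ card (Basis :: (real^'d) set)"
    using assms by (simp add: powr_realpow powr_minus_divide powr_half_sqrt)
  finally show ?thesis
    using assms unfolding heat_kernel_def normal_density_def
    by (simp add: prod_dividef exp_sum[symmetric] norm_power2_eq_sum_Basis sum_divide_distrib sum_negf field_simps)
qed

lemma nn_integral_heat_kernel:
  assumes "0 < t"
  shows "(\<integral>\<^sup>+x. ennreal (heat_kernel t (x::real^'d)) \<partial>lborel) = 1"
proof -
  have "(\<integral>\<^sup>+x. ennreal (heat_kernel t (x::real^'d)) \<partial>lborel)
      = (\<integral>\<^sup>+x. (\<Prod>b\<in>Basis. ennreal (normal_density 0 (sqrt t) ((x::real^'d) \<bullet> b))) \<partial>lborel)"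
    using assms by (simp add: heat_kernel_eq_prod_normal_density prod_ennreal)
  also have "\<dots> = (\<Prod>b\<in>(Basis::(real^'d) set). \<integral>\<^sup>+y. ennreal (normal_density 0 (sqrt t) y) \<partial>lborel)"
    by (rule nn_integral_lborel_prod) auto
  also have "\<dots> = 1"
    using assms by (simp add: nn_integral_eq_integral)
  finally show ?thesis .
qed

lemma heat_kernel_nonneg: "0 \<le> heat_kernel t x"
  unfolding heat_kernel_def by simp

lemma heat_kernel_minus_commute: "heat_kernel t (x - y) = heat_kernel t (y - x)"
  unfolding heat_kernel_def by (simp add: norm_minus_commute)

lemma heat_kernel_le:
  fixes x :: "real^'d"
  assumes "0 < t"
  shows "heat_kernel t x \<le> (2 * pi) powr (- real CARD('d) / 2) * t powr (- real CARD('d) / 2)"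
proof -
  have "heat_kernel t x \<le> (2 * pi * t) powr (- real CARD('d) / 2)"
    using assms unfolding heat_kernel_def by (intro mult_left_le) auto
  also have "\<dots> = (2 * pi) powr (- real CARD('d) / 2) * t powr (- real CARD('d) / 2)"
    using assms by (simp add: powr_mult)
  finally show ?thesis .
qed

lemma borel_measurable_heat_kernel[measurable]:
  "case_prod heat_kernel \<in> borel_measurable (borel \<Otimes>\<^sub>M (borel :: (real^'d) measure))"
  unfolding heat_kernel_def by (simp add: case_prod_beta') measurable

lemma borel_measurable_green[measurable]:
  "case_prod green \<in> borel_measurable (borel \<Otimes>\<^sub>M (borel :: (real^'d) measure))"
  unfolding green_def by (simp add: case_prod_beta') measurable

lemma borel_measurable_indicator_cball[measurable (raw)]:
  fixes f g :: "'m \<Rightarrow> 'a::euclidean_space"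
  shows "f \<in> borel_measurable M \<Longrightarrow> g \<in> borel_measurable M \<Longrightarrow>
    (\<lambda>x. indicator (cball (f x) r) (g x) :: ennreal) \<in> borel_measurable M"
  unfolding indicator_def mem_cball by measurable

lemma green_commute: "green x y = green y x"
  unfolding green_def by (simp add: heat_kernel_minus_commute)

section \<open>Green energy of two unit balls\<close>

definition ball_energy :: "real^'d \<Rightarrow> real^'d \<Rightarrow> ennreal" where
  "ball_energy a b =
     (\<integral>\<^sup>+y. (\<integral>\<^sup>+x. green x y * indicator (cball a 1) x * indicator (cball b 1) y \<partial>lborel) \<partial>lborel)"

lemma borel_measurable_ball_energy[measurable]:
  "case_prod ball_energy \<in> borel_measurable (borel \<Otimes>\<^sub>M borel)"
  unfolding ball_energy_def by (simp add: case_prod_beta') measurable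

lemma ball_energy_translate: "ball_energy a b = ball_energy 0 (b - a)"
proof -
  have inner: "(\<integral>\<^sup>+x. green x y * indicator (cball a 1) x * indicator (cball b 1) y \<partial>lborel)
     = (\<integral>\<^sup>+x. green (a + x) y * indicator (cball 0 1) x * indicator (cball b 1) y \<partial>lborel)" for y
    by (subst nn_integral_lborel_translate[symmetric, where c=a]) (auto simp: dist_norm indicator_def)
  have "ball_energy a b =
     (\<integral>\<^sup>+y. (\<integral>\<^sup>+x. green (a + x) y * indicator (cball 0 1) x * indicator (cball b 1) y \<partial>lborel) \<partial>lborel)"
    unfolding ball_energy_def inner ..
  also have "\<dots> = (\<integral>\<^sup>+y. (\<integral>\<^sup>+x. green (a + x) (a + y) * indicator (cball 0 1) x
                             * indicator (cball b 1) (a + y) \<partial>lborel) \<partial>lborel)"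
    by (subst nn_integral_lborel_translate[symmetric, where c=a]) auto
  also have "\<dots> = ball_energy 0 (b - a)"
    unfolding ball_energy_def green_def by (simp add: dist_norm indicator_def algebra_simps)
  finally show ?thesis .
qed

lemma ball_energy_commute: "ball_energy a b = ball_energy b a"
proof -
  have "ball_energy a b =
     (\<integral>\<^sup>+x. (\<integral>\<^sup>+y. green x y * indicator (cball a 1) x * indicator (cball b 1) y \<partial>lborel) \<partial>lborel)"
    unfolding ball_energy_def by (rule lborel_pair.Fubini') measurable
  then show ?thesis
    unfolding ball_energy_def by (simp add: green_commute mult_ac)
qed

lemma nn_integral_green_le:
  fixes \<psi> :: "real^'d \<Rightarrow> ennreal"
  assumes [measurable]: "\<psi> \<in> borel_measurable borel"
    and \<psi>_le: "\<And>y. \<psi> y \<le> ennreal m" and \<psi>_int: "(\<integral>\<^sup>+y. \<psi> y \<partial>lborel) \<le> ennreal V"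
  shows "(\<integral>\<^sup>+y. green x y * \<psi> y \<partial>lborel) \<le>
    (\<integral>\<^sup>+t. indicator {0<..} t * ennreal (min m (V * (2 * pi) powr (- real CARD('d) / 2)
                                                   * t powr (- real CARD('d) / 2))) \<partial>lborel)"
proof -
  let ?bound = "\<lambda>t. (2 * pi) powr (- real CARD('d) / 2) * t powr (- real CARD('d) / 2)"
  have time_slice: "(\<integral>\<^sup>+y. ennreal (heat_kernel t (x - y)) * \<psi> y \<partial>lborel) \<le> ennreal (min m (V * ?bound t))"
    if "0 < t" for t
  proof (rule le_ennreal_min)
    have "(\<integral>\<^sup>+y. ennreal (heat_kernel t (x - y)) * \<psi> y \<partial>lborel)
        \<le> (\<integral>\<^sup>+y. ennreal (heat_kernel t (x - y)) * ennreal m \<partial>lborel)"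
      by (intro nn_integral_mono mult_left_mono \<psi>_le) auto
    also have "\<dots> = ennreal m"
      using nn_integral_lborel_reflect[of "\<lambda>y. ennreal (heat_kernel t y)" x]
      by (simp add: nn_integral_multc nn_integral_heat_kernel[OF \<open>0 < t\<close>])
    finally show "(\<integral>\<^sup>+y. ennreal (heat_kernel t (x - y)) * \<psi> y \<partial>lborel) \<le> ennreal m" .
    have "(\<integral>\<^sup>+y. ennreal (heat_kernel t (x - y)) * \<psi> y \<partial>lborel)
        \<le> (\<integral>\<^sup>+y. ennreal (?bound t) * \<psi> y \<partial>lborel)"
      using heat_kernel_le[OF \<open>0 < t\<close>] by (intro nn_integral_mono mult_right_mono) auto
    also have "\<dots> \<le> ennreal (?bound t) * ennreal V"
      by (simp add: nn_integral_cmult mult_left_mono \<psi>_int)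
    also have "\<dots> = ennreal (V * ?bound t)"
      by (simp add: ennreal_mult''[symmetric] mult.commute)
    finally show "(\<integral>\<^sup>+y. ennreal (heat_kernel t (x - y)) * \<psi> y \<partial>lborel) \<le> ennreal (V * ?bound t)" .
  qed
  have "(\<integral>\<^sup>+y. green x y * \<psi> y \<partial>lborel) =
     (\<integral>\<^sup>+y. (\<integral>\<^sup>+t. indicator {0<..} t * (ennreal (heat_kernel t (x - y)) * \<psi> y) \<partial>lborel) \<partial>lborel)"
    unfolding green_def by (subst nn_integral_multc[symmetric]) (auto simp: mult_ac)
  also have "\<dots> = (\<integral>\<^sup>+t. (\<integral>\<^sup>+y. indicator {0<..} t * (ennreal (heat_kernel t (x - y)) * \<psi> y) \<partial>lborel) \<partial>lborel)"
    by (rule lborel_pair.Fubini') measurable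
  also have "\<dots> = (\<integral>\<^sup>+t. indicator {0<..} t * (\<integral>\<^sup>+y. ennreal (heat_kernel t (x - y)) * \<psi> y \<partial>lborel) \<partial>lborel)"
    by (simp add: nn_integral_cmult)
  also have "\<dots> \<le> (\<integral>\<^sup>+t. indicator {0<..} t * ennreal (min m (V * ?bound t)) \<partial>lborel)"
    using time_slice by (intro nn_integral_mono) (auto simp: indicator_def)
  finally show ?thesis by (simp add: mult.assoc)
qed

lemma nn_integral_ball_energy_eq:
  fixes f :: "real^'d \<Rightarrow> ennreal"
  assumes [measurable]: "f \<in> borel_measurable borel"
  shows "(\<integral>\<^sup>+w. f w * ball_energy 0 w \<partial>lborel) = (\<integral>\<^sup>+x. indicator (cball 0 1) x *
           (\<integral>\<^sup>+y. green x y * (\<integral>\<^sup>+w. f w * indicator (cball w 1) y \<partial>lborel) \<partial>lborel) \<partial>lborel)"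
proof -
  let ?G = "\<lambda>w x y. f w * (green x y * indicator (cball 0 1) x * indicator (cball w 1) y)"
  have "(\<integral>\<^sup>+w. f w * ball_energy 0 w \<partial>lborel) =
        (\<integral>\<^sup>+w. (\<integral>\<^sup>+y. (\<integral>\<^sup>+x. ?G w x y \<partial>lborel) \<partial>lborel) \<partial>lborel)"
    unfolding ball_energy_def by (simp add: nn_integral_cmult[symmetric])
  also have "\<dots> = (\<integral>\<^sup>+y. (\<integral>\<^sup>+x. (\<integral>\<^sup>+w. ?G w x y \<partial>lborel) \<partial>lborel) \<partial>lborel)"
    by (subst lborel_pair.Fubini', measurable, intro nn_integral_cong lborel_pair.Fubini', measurable)
  also have "\<dots> = (\<integral>\<^sup>+y. (\<integral>\<^sup>+x. indicator (cball 0 1) x *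
                      (green x y * (\<integral>\<^sup>+w. f w * indicator (cball w 1) y \<partial>lborel)) \<partial>lborel) \<partial>lborel)"
    by (simp add: nn_integral_cmult[symmetric] mult_ac)
  also have "\<dots> = (\<integral>\<^sup>+x. indicator (cball 0 1) x *
           (\<integral>\<^sup>+y. green x y * (\<integral>\<^sup>+w. f w * indicator (cball w 1) y \<partial>lborel) \<partial>lborel) \<partial>lborel)"
    by (subst lborel_pair.Fubini', measurable) (simp add: nn_integral_cmult)
  finally show ?thesis .
qed

lemma nn_integral_density_ball_energy_le:
  fixes q :: "real^'d \<Rightarrow> real"
  defines "V \<equiv> unit_ball_vol (real CARD('d))"
  assumes [measurable]: "q \<in> borel_measurable borel" and q_nonneg: "\<And>w. 0 \<le> q w"
    and q_int: "(\<integral>\<^sup>+w. ennreal (q w) \<partial>lborel) = 1" and q_le: "\<And>w. q w \<le> B"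
  shows "(\<integral>\<^sup>+w. ennreal (q w) * ball_energy 0 w \<partial>lborel) \<le> ennreal V *
    (\<integral>\<^sup>+t. indicator {0<..} t * ennreal (min (min 1 (B * V)) (V * (2 * pi) powr (- real CARD('d) / 2)
                                                               * t powr (- real CARD('d) / 2))) \<partial>lborel)"
    (is "_ \<le> _ * ?K")
proof -
  have V: "emeasure lborel (cball (c::real^'d) 1) = ennreal V" for c
    unfolding V_def by (subst emeasure_cball) auto
  define \<psi> where "\<psi> y = (\<integral>\<^sup>+w. ennreal (q w) * indicator (cball w 1) y \<partial>lborel)" for y :: "real^'d"
  have [measurable]: "\<psi> \<in> borel_measurable borel"
    unfolding \<psi>_def by measurable
  have "\<psi> y \<le> ennreal (min 1 (B * V))" for y
  proof (rule le_ennreal_min)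
    have "\<psi> y \<le> (\<integral>\<^sup>+w. ennreal (q w) \<partial>lborel)"
      unfolding \<psi>_def by (intro nn_integral_mono) (auto simp: indicator_def)
    then show "\<psi> y \<le> ennreal 1"
      using q_int by simp
    have "\<psi> y \<le> (\<integral>\<^sup>+w. ennreal B * indicator (cball y 1) w \<partial>lborel)"
      unfolding \<psi>_def
      by (intro nn_integral_mono) (auto simp: indicator_def dist_commute q_le intro: ennreal_leI)
    also have "\<dots> = ennreal (B * V)"
      using q_nonneg[of 0] q_le[of 0] by (simp add: nn_integral_cmult_indicator V ennreal_mult')
    finally show "\<psi> y \<le> ennreal (B * V)" .
  qed
  moreover have "(\<integral>\<^sup>+y. \<psi> y \<partial>lborel) = ennreal V"
    unfolding \<psi>_def by (subst lborel_pair.Fubini', measurable)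
      (simp add: nn_integral_cmult_indicator V nn_integral_multc q_int)
  ultimately have "(\<integral>\<^sup>+y. green x y * \<psi> y \<partial>lborel) \<le> ?K" for x
    by (intro nn_integral_green_le) auto
  then have "(\<integral>\<^sup>+w. ennreal (q w) * ball_energy 0 w \<partial>lborel) \<le> (\<integral>\<^sup>+x. indicator (cball 0 1) (x::real^'d) * ?K \<partial>lborel)"
    unfolding nn_integral_ball_energy_eq[of "\<lambda>w. ennreal (q w)", simplified] \<psi>_def[symmetric]
    by (intro nn_integral_mono mult_left_mono) auto
  also have "\<dots> = ennreal V * ?K"
    by (simp add: nn_integral_multc V mult.commute)
  finally show ?thesis .
qed

lemma nn_integral_powr_tail_le:
  fixes e \<sigma> :: real
  assumes "e \<le> -3/2" "0 < \<sigma>"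
  shows "(\<integral>\<^sup>+t. ennreal (indicator {\<sigma>..} t * t powr e) \<partial>lborel) \<le> ennreal (2 * \<sigma> powr (e + 1))"
proof -
  have "((\<lambda>t. t powr e) has_integral - (\<sigma> powr (e + 1)) / (e + 1)) {\<sigma>..}"
    using assms by (intro has_integral_powr_to_inf) auto
  then have "(\<integral>\<^sup>+t. ennreal (indicator {\<sigma>..} t * t powr e) \<partial>lborel) = ennreal (- (\<sigma> powr (e + 1)) / (e + 1))"
    by (subst nn_integral_has_integral_lebesgue) auto
  also have "\<dots> \<le> ennreal (2 * \<sigma> powr (e + 1))"
  proof (intro ennreal_leI)
    have "1 / (- (e + 1)) \<le> 2"
      using assms by (simp add: divide_le_eq)
    then have "\<sigma> powr (e + 1) * (1 / (- (e + 1))) \<le> \<sigma> powr (e + 1) * 2"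
      by (intro mult_left_mono) auto
    moreover have "- (\<sigma> powr (e + 1)) / (e + 1) = \<sigma> powr (e + 1) * (1 / (- (e + 1)))"
      using assms by (simp add: field_simps)
    ultimately show "- (\<sigma> powr (e + 1)) / (e + 1) \<le> 2 * \<sigma> powr (e + 1)"
      by (simp only: mult.commute)
  qed
  finally show ?thesis .
qed

lemma nn_integral_min_powr_le:
  fixes A c e \<sigma> :: real
  assumes A: "0 \<le> A" and c: "0 \<le> c" and e: "e \<le> -3/2" and \<sigma>: "0 < \<sigma>"
  shows "(\<integral>\<^sup>+t. indicator {0<..} t * ennreal (min A (c * t powr e)) \<partial>lborel)
    \<le> ennreal (A * \<sigma> + 2 * c * \<sigma> powr (e + 1))"
proof -
  have "indicator {0<..} t * ennreal (min A (c * t powr e))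
     \<le> ennreal A * indicator {0<..\<sigma>} t + ennreal c * ennreal (indicator {\<sigma>..} t * t powr e)" for t
    using A c by (cases "0 < t"; cases "t \<le> \<sigma>")
      (auto simp: indicator_def ennreal_mult'[symmetric] intro!: ennreal_leI add_increasing add_increasing2)
  then have "(\<integral>\<^sup>+t. indicator {0<..} t * ennreal (min A (c * t powr e)) \<partial>lborel)
      \<le> (\<integral>\<^sup>+t. ennreal A * indicator {0<..\<sigma>} t + ennreal c * ennreal (indicator {\<sigma>..} t * t powr e) \<partial>lborel)"
    by (intro nn_integral_mono)
  also have "\<dots> = ennreal A * ennreal \<sigma> + ennreal c * (\<integral>\<^sup>+t. ennreal (indicator {\<sigma>..} t * t powr e) \<partial>lborel)"
    using \<sigma> by (simp add: nn_integral_add nn_integral_cmult nn_integral_cmult_indicator)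
  also have "\<dots> \<le> ennreal A * ennreal \<sigma> + ennreal c * ennreal (2 * \<sigma> powr (e + 1))"
    by (intro add_left_mono mult_left_mono nn_integral_powr_tail_le e \<sigma>) auto
  also have "\<dots> = ennreal (A * \<sigma> + 2 * c * \<sigma> powr (e + 1))"
    using A c \<sigma> by (simp add: ennreal_mult'[symmetric] ennreal_plus[symmetric] del: ennreal_plus)
  finally show ?thesis .
qed

lemma nn_integral_min_min_powr_le:
  fixes c e \<sigma> :: real
  assumes c: "0 \<le> c" and e: "e \<le> -3/2" and \<sigma>: "0 < \<sigma>"
  shows "(\<integral>\<^sup>+t. indicator {0<..} t * ennreal (min (min 1 (c * \<sigma> powr e)) (c * t powr e)) \<partial>lborel)
    \<le> ennreal (min (1 + 2 * c) (3 * c * \<sigma> powr (e + 1)))"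
proof (rule le_ennreal_min)
  let ?A = "min 1 (c * \<sigma> powr e)"
  have A: "0 \<le> ?A"
    using c by simp
  show "(\<integral>\<^sup>+t. indicator {0<..} t * ennreal (min ?A (c * t powr e)) \<partial>lborel) \<le> ennreal (1 + 2 * c)"
    using nn_integral_min_powr_le[OF A c e zero_less_one] by (rule order_trans) (auto intro!: ennreal_leI)
  have "?A * \<sigma> \<le> c * \<sigma> powr e * \<sigma>"
    using \<sigma> by (intro mult_right_mono) auto
  also have "\<dots> = c * \<sigma> powr (e + 1)"
    using \<sigma> by (simp add: powr_add)
  finally have "?A * \<sigma> + 2 * c * \<sigma> powr (e + 1) \<le> 3 * c * \<sigma> powr (e + 1)"
    by simp
  then show "(\<integral>\<^sup>+t. indicator {0<..} t * ennreal (min ?A (c * t powr e)) \<partial>lborel) \<le> ennreal (3 * c * \<sigma> powr (e + 1))"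
    using nn_integral_min_powr_le[OF A c e \<sigma>] by (meson ennreal_leI order_trans)
qed

lemma nn_integral_heat_kernel_ball_energy_le:
  fixes c :: "real^'d"
  defines "V \<equiv> unit_ball_vol (real CARD('d))"
    and "c\<^sub>0 \<equiv> unit_ball_vol (real CARD('d)) * (2 * pi) powr (- real CARD('d) / 2)"
  assumes d: "3 \<le> CARD('d)" and \<sigma>: "0 < \<sigma>"
  shows "(\<integral>\<^sup>+w. ennreal (heat_kernel \<sigma> (w - c)) * ball_energy 0 w \<partial>lborel)
    \<le> ennreal (V * min (1 + 2 * c\<^sub>0) (3 * c\<^sub>0 * \<sigma> powr (1 - real CARD('d) / 2)))"
proof -
  define e where "e = - real CARD('d) / 2"
  define B where "B = (2 * pi) powr e * \<sigma> powr e"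
  have "V * (2 * pi) powr e = c\<^sub>0" and "B * V = c\<^sub>0 * \<sigma> powr e"
    unfolding V_def c\<^sub>0_def e_def B_def by simp_all
  moreover have "(\<integral>\<^sup>+w. ennreal (heat_kernel \<sigma> (w - c)) * ball_energy 0 w \<partial>lborel)
    \<le> ennreal V * (\<integral>\<^sup>+t. indicator {0<..} t * ennreal (min (min 1 (B * V)) (V * (2 * pi) powr e * t powr e)) \<partial>lborel)"
    unfolding V_def e_def
  proof (rule nn_integral_density_ball_energy_le)
    show "(\<integral>\<^sup>+w. ennreal (heat_kernel \<sigma> (w - c)) \<partial>lborel) = 1"
      using nn_integral_lborel_translate[of "\<lambda>w. ennreal (heat_kernel \<sigma> (w - c))" c]
      by (simp add: nn_integral_heat_kernel[OF \<sigma>])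
    show "heat_kernel \<sigma> (w - c) \<le> B" for w
      unfolding B_def e_def by (rule heat_kernel_le[OF \<sigma>])
  qed (auto simp: heat_kernel_nonneg)
  ultimately have "(\<integral>\<^sup>+w. ennreal (heat_kernel \<sigma> (w - c)) * ball_energy 0 w \<partial>lborel)
    \<le> ennreal V * (\<integral>\<^sup>+t. indicator {0<..} t * ennreal (min (min 1 (c\<^sub>0 * \<sigma> powr e)) (c\<^sub>0 * t powr e)) \<partial>lborel)"
    by (simp only:)
  also have "\<dots> \<le> ennreal V * ennreal (min (1 + 2 * c\<^sub>0) (3 * c\<^sub>0 * \<sigma> powr (e + 1)))"
    using d \<sigma> unfolding c\<^sub>0_def e_def by (intro mult_left_mono nn_integral_min_min_powr_le) auto
  also have "\<dots> = ennreal (V * min (1 + 2 * c\<^sub>0) (3 * c\<^sub>0 * \<sigma> powr (1 - real CARD('d) / 2)))"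
    unfolding V_def e_def by (simp add: ennreal_mult')
  finally show ?thesis .
qed

lemma nn_integral_ball_energy_gaussian_le:
  fixes Z :: "'a \<Rightarrow> real^'d"
  defines "V \<equiv> unit_ball_vol (real CARD('d))"
    and "c\<^sub>0 \<equiv> unit_ball_vol (real CARD('d)) * (2 * pi) powr (- real CARD('d) / 2)"
  assumes d: "3 \<le> CARD('d)" and \<sigma>: "0 < \<sigma>"
    and Z: "distributed P lborel Z (\<lambda>x. ennreal (heat_kernel \<sigma> x))"
  shows "(\<integral>\<^sup>+\<omega>. ball_energy 0 (c + Z \<omega>) \<partial>P)
    \<le> ennreal (V * min (1 + 2 * c\<^sub>0) (3 * c\<^sub>0 * \<sigma> powr (1 - real CARD('d) / 2)))"
proof -
  have "(\<integral>\<^sup>+\<omega>. ball_energy 0 (c + Z \<omega>) \<partial>P)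
      = (\<integral>\<^sup>+x. ennreal (heat_kernel \<sigma> ((c + x) - c)) * ball_energy 0 (c + x) \<partial>lborel)"
    by (simp add: distributed_nn_integral[OF Z])
  also have "\<dots> = (\<integral>\<^sup>+w. ennreal (heat_kernel \<sigma> (w - c)) * ball_energy 0 w \<partial>lborel)"
    by (rule nn_integral_lborel_translate) measurable
  also have "\<dots> \<le> ennreal (V * min (1 + 2 * c\<^sub>0) (3 * c\<^sub>0 * \<sigma> powr (1 - real CARD('d) / 2)))"
    unfolding V_def c\<^sub>0_def by (rule nn_integral_heat_kernel_ball_energy_le[OF d \<sigma>])
  finally show ?thesis .
qed

section \<open>Brownian motion\<close>

lemma brownian_motion_measurable: "brownian_motion P Y z \<Longrightarrow> Y t \<in> borel_measurable P"
  unfolding brownian_motion_def by auto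

lemma brownian_motion_start: "brownian_motion P Y z \<Longrightarrow> \<omega> \<in> space P \<Longrightarrow> Y 0 \<omega> = z"
  unfolding brownian_motion_def by auto

lemma brownian_motion_continuous:
  "brownian_motion P Y z \<Longrightarrow> \<omega> \<in> space P \<Longrightarrow> continuous_on {0..} (\<lambda>t. Y t \<omega>)"
  unfolding brownian_motion_def by auto

lemma brownian_motion_increment:
  "brownian_motion P Y z \<Longrightarrow> 0 \<le> s \<Longrightarrow> s < t \<Longrightarrow>
    distributed P lborel (\<lambda>\<omega>. Y t \<omega> - Y s \<omega>) (\<lambda>x. ennreal (heat_kernel (t - s) x))"
  unfolding brownian_motion_def by auto

lemma nn_integral_ball_energy_brownian_le:
  fixes Y :: "real \<Rightarrow> 'a \<Rightarrow> real^'d"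
  defines "V \<equiv> unit_ball_vol (real CARD('d))"
    and "c\<^sub>0 \<equiv> unit_ball_vol (real CARD('d)) * (2 * pi) powr (- real CARD('d) / 2)"
  assumes d: "3 \<le> CARD('d)" and Y: "brownian_motion P Y z" and "0 \<le> s" "0 \<le> t" "s \<noteq> t"
  shows "(\<integral>\<^sup>+\<omega>. ball_energy (Y s \<omega>) (Y t \<omega>) \<partial>P)
    \<le> ennreal (V * min (1 + 2 * c\<^sub>0) (3 * c\<^sub>0 * \<bar>t - s\<bar> powr (1 - real CARD('d) / 2)))"
proof -
  have increasing_times: "(\<integral>\<^sup>+\<omega>. ball_energy (Y s \<omega>) (Y t \<omega>) \<partial>P)
    \<le> ennreal (V * min (1 + 2 * c\<^sub>0) (3 * c\<^sub>0 * (t - s) powr (1 - real CARD('d) / 2)))"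
    if "0 \<le> s" "s < t" for s t
  proof -
    have "(\<integral>\<^sup>+\<omega>. ball_energy (Y s \<omega>) (Y t \<omega>) \<partial>P) = (\<integral>\<^sup>+\<omega>. ball_energy 0 (0 + (Y t \<omega> - Y s \<omega>)) \<partial>P)"
      by (subst ball_energy_translate) simp
    also have "\<dots> \<le> ennreal (V * min (1 + 2 * c\<^sub>0) (3 * c\<^sub>0 * (t - s) powr (1 - real CARD('d) / 2)))"
      unfolding V_def c\<^sub>0_def using that
      by (intro nn_integral_ball_energy_gaussian_le d brownian_motion_increment[OF Y]) auto
    finally show ?thesis .
  qed
  show ?thesis
  proof (cases "s < t")
    case True
    then show ?thesis using increasing_times[of s t] \<open>0 \<le> s\<close> by simp
  next
    case False
    then show ?thesis using increasing_times[of t s] \<open>0 \<le> t\<close> \<open>s \<noteq> t\<close>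
      by (simp add: ball_energy_commute[of "Y s _"] abs_minus_commute)
  qed
qed

lemma nn_integral_ball_energy_indep_le:
  fixes U :: "real \<Rightarrow> 'a \<Rightarrow> real^'d"
  defines "V \<equiv> unit_ball_vol (real CARD('d))"
    and "c\<^sub>0 \<equiv> unit_ball_vol (real CARD('d)) * (2 * pi) powr (- real CARD('d) / 2)"
  assumes "prob_space P" and d: "3 \<le> CARD('d)" and U: "brownian_motion P U z" and s: "0 < s"
    and indep: "prob_space.indep_var P borel (U s) borel W"
  shows "(\<integral>\<^sup>+\<omega>. ball_energy (U s \<omega>) (W \<omega>) \<partial>P) \<le> ennreal (V * (3 * c\<^sub>0 * s powr (1 - real CARD('d) / 2)))"
proof -
  interpret prob_space P by fact
  have "(\<integral>\<^sup>+\<omega>. ball_energy (U s \<omega>) b \<partial>P) \<le> ennreal (V * (3 * c\<^sub>0 * s powr (1 - real CARD('d) / 2)))" for b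
  proof -
    have "(\<integral>\<^sup>+\<omega>. ball_energy (U s \<omega>) b \<partial>P) = (\<integral>\<^sup>+\<omega>. ball_energy 0 ((z - b) + (U s \<omega> - U 0 \<omega>)) \<partial>P)"
      by (intro nn_integral_cong)
        (simp add: ball_energy_commute[of "U s _"] ball_energy_translate[of b] brownian_motion_start[OF U])
    also have "\<dots> \<le> ennreal (V * min (1 + 2 * c\<^sub>0) (3 * c\<^sub>0 * s powr (1 - real CARD('d) / 2)))"
      unfolding V_def c\<^sub>0_def
      by (intro nn_integral_ball_energy_gaussian_le d s) (use brownian_motion_increment[OF U, of 0 s] s in simp)
    also have "\<dots> \<le> ennreal (V * (3 * c\<^sub>0 * s powr (1 - real CARD('d) / 2)))"
      unfolding V_def by (intro ennreal_leI mult_left_mono) auto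
    finally show ?thesis .
  qed
  then show ?thesis
    by (rule nn_integral_indep_var_le[OF indep borel_measurable_ball_energy])
qed

lemma indep_var_path_values:
  fixes X :: "nat \<Rightarrow> real \<Rightarrow> 'a \<Rightarrow> 'b::topological_space"
  assumes "prob_space P"
    and indep: "prob_space.indep_vars P (\<lambda>_. Pi\<^sub>M {0..} (\<lambda>_. borel)) (\<lambda>i \<omega>. restrict (\<lambda>t. X i t \<omega>) {0..}) UNIV"
    and "i \<noteq> j" "0 \<le> s" "0 \<le> t"
  shows "prob_space.indep_var P borel (X i s) borel (X j t)"
proof -
  interpret prob_space P by fact
  let ?path = "\<lambda>i \<omega>. restrict (\<lambda>t. X i t \<omega>) {0..}"
  have paths: "indep_var (Pi\<^sub>M {i} (\<lambda>_. Pi\<^sub>M {0..} (\<lambda>_. borel))) (\<lambda>\<omega>. restrict (\<lambda>k. ?path k \<omega>) {i})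
                         (Pi\<^sub>M {j} (\<lambda>_. Pi\<^sub>M {0..} (\<lambda>_. borel))) (\<lambda>\<omega>. restrict (\<lambda>k. ?path k \<omega>) {j})"
    using \<open>i \<noteq> j\<close> by (intro indep_var_restrict[OF indep]) auto
  have eval: "(\<lambda>f. f k \<tau>) \<in> measurable (Pi\<^sub>M {k} (\<lambda>_. Pi\<^sub>M {0..} (\<lambda>_. borel))) (borel :: 'b measure)"
    if "0 \<le> \<tau>" for k and \<tau> :: real
  proof -
    have "(\<lambda>f. f k) \<in> measurable (Pi\<^sub>M {k} (\<lambda>_. Pi\<^sub>M {0..} (\<lambda>_. borel))) (Pi\<^sub>M {0..} (\<lambda>_. borel :: 'b measure))"
      by (rule measurable_component_singleton) simp
    moreover have "(\<lambda>g. g \<tau>) \<in> measurable (Pi\<^sub>M {0..} (\<lambda>_. borel :: 'b measure)) borel"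
      using that by (intro measurable_component_singleton) simp
    ultimately show ?thesis
      by (rule measurable_compose)
  qed
  have "indep_var borel ((\<lambda>f. f i s) \<circ> (\<lambda>\<omega>. restrict (\<lambda>k. ?path k \<omega>) {i}))
                  borel ((\<lambda>f. f j t) \<circ> (\<lambda>\<omega>. restrict (\<lambda>k. ?path k \<omega>) {j}))"
    using assms by (intro indep_var_compose[OF paths] eval)
  moreover have "(\<lambda>f. f i s) \<circ> (\<lambda>\<omega>. restrict (\<lambda>k. ?path k \<omega>) {i}) = X i s"
    "(\<lambda>f. f j t) \<circ> (\<lambda>\<omega>. restrict (\<lambda>k. ?path k \<omega>) {j}) = X j t"
    using assms by auto
  ultimately show ?thesis
    by simp
qed

lemma LIMSEQ_floor_mult_divide: "(\<lambda>n. real_of_int \<lfloor>x * real (Suc n)\<rfloor> / real (Suc n)) \<longlonglongrightarrow> x"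
proof (rule tendsto_sandwich[of "\<lambda>n. x - 1 / real (Suc n)" _ _ "\<lambda>n. x"])
  show "\<forall>\<^sub>F n in sequentially. x - 1 / real (Suc n) \<le> real_of_int \<lfloor>x * real (Suc n)\<rfloor> / real (Suc n)"
  proof (intro always_eventually allI)
    fix n
    have "x - 1 / real (Suc n) = (x * real (Suc n) - 1) / real (Suc n)"
      by (simp add: field_simps)
    also have "\<dots> \<le> real_of_int \<lfloor>x * real (Suc n)\<rfloor> / real (Suc n)"
      by (intro divide_right_mono) linarith+
    finally show "x - 1 / real (Suc n) \<le> real_of_int \<lfloor>x * real (Suc n)\<rfloor> / real (Suc n)" .
  qed
  show "\<forall>\<^sub>F n in sequentially. real_of_int \<lfloor>x * real (Suc n)\<rfloor> / real (Suc n) \<le> x"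
    by (intro always_eventually allI) (simp add: field_simps)
  show "(\<lambda>n. x - 1 / real (Suc n)) \<longlonglongrightarrow> x"
    using tendsto_diff[OF tendsto_const LIMSEQ_Suc[OF lim_const_over_n[of 1]]] by simp
qed simp

text \<open>
  Brownian paths are only continuous on \<open>[0,\<infinity>)\<close>; freezing them at their time-0 value for negative
  times gives a process that is jointly measurable on \<open>\<real> \<times> \<Omega>\<close>, as Fubini over \<open>lborel\<close> requires.
\<close>
definition hold_at_0 :: "(real \<Rightarrow> 'a) \<Rightarrow> real \<Rightarrow> 'a" where
  "hold_at_0 Y t = Y (max 0 t)"

lemma borel_measurable_hold_at_0:
  fixes Y :: "real \<Rightarrow> 'a \<Rightarrow> 'b::metric_space"
  assumes [measurable]: "\<And>t. Y t \<in> borel_measurable P"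
    and cont: "\<And>\<omega>. \<omega> \<in> space P \<Longrightarrow> continuous_on {0..} (\<lambda>t. Y t \<omega>)"
  shows "case_prod (hold_at_0 Y) \<in> borel_measurable (borel \<Otimes>\<^sub>M P)"
  unfolding hold_at_0_def case_prod_beta'
proof (rule borel_measurable_LIMSEQ_metric)
  fix n :: nat
  show "(\<lambda>p. Y (max 0 (real_of_int \<lfloor>fst p * real (Suc n)\<rfloor> / real (Suc n))) (snd p)) \<in> borel_measurable (borel \<Otimes>\<^sub>M P)"
    by (rule measurable_compose_countable[where g="\<lambda>p. \<lfloor>fst p * real (Suc n)\<rfloor>"]) measurable
next
  fix p :: "real \<times> 'a" assume "p \<in> space (borel \<Otimes>\<^sub>M P)"
  then have "continuous_on {0..} (\<lambda>t. Y t (snd p))"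
    by (intro cont) (auto simp: space_pair_measure)
  moreover have "(\<lambda>n. max 0 (real_of_int \<lfloor>fst p * real (Suc n)\<rfloor> / real (Suc n))) \<longlonglongrightarrow> max 0 (fst p)"
    by (intro tendsto_max tendsto_const LIMSEQ_floor_mult_divide)
  ultimately show "(\<lambda>n. Y (max 0 (real_of_int \<lfloor>fst p * real (Suc n)\<rfloor> / real (Suc n))) (snd p)) \<longlonglongrightarrow> Y (max 0 (fst p)) (snd p)"
    by (rule continuous_on_tendsto_compose) auto
qed

lemma borel_measurable_hold_at_0_brownian:
  "brownian_motion P Y z \<Longrightarrow> case_prod (hold_at_0 Y) \<in> borel_measurable (borel \<Otimes>\<^sub>M P)"
  by (blast intro: borel_measurable_hold_at_0 brownian_motion_measurable brownian_motion_continuous)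

section \<open>Time integrals\<close>

lemma nn_integral_min_abs_powr_le:
  fixes A B e t :: real
  assumes A: "0 \<le> A" and B: "0 \<le> B" and e: "e \<le> -3/2"
  shows "(\<integral>\<^sup>+s. ennreal (min A (B * \<bar>t - s\<bar> powr e)) \<partial>lborel) \<le> ennreal (2 * (A + 2 * B))"
proof -
  let ?g = "\<lambda>u. indicator {0<..} u * ennreal (min A (B * u powr e))"
  have half: "(\<integral>\<^sup>+u. ?g u \<partial>lborel) \<le> ennreal (A + 2 * B)"
    using nn_integral_min_powr_le[OF A B e zero_less_one] by simp
  \<comment> \<open>At \<open>s = t\<close> both sides vanish, since \<open>0 powr e = 0\<close>.\<close>
  have "ennreal (min A (B * \<bar>t - s\<bar> powr e)) = ?g (t - s) + ?g (s - t)" for s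
    using A B by (cases "s < t"; cases "t < s") (auto simp: indicator_def)
  moreover have "(\<integral>\<^sup>+s. ?g (t - s) \<partial>lborel) = (\<integral>\<^sup>+u. ?g u \<partial>lborel)"
    by (rule nn_integral_lborel_reflect) measurable
  moreover have "(\<integral>\<^sup>+s. ?g (- t + s) \<partial>lborel) = (\<integral>\<^sup>+u. ?g u \<partial>lborel)"
    by (rule nn_integral_lborel_translate) measurable
  ultimately have "(\<integral>\<^sup>+s. ennreal (min A (B * \<bar>t - s\<bar> powr e)) \<partial>lborel)
      = (\<integral>\<^sup>+u. ?g u \<partial>lborel) + (\<integral>\<^sup>+u. ?g u \<partial>lborel)"
    by (simp add: nn_integral_add)
  also have "\<dots> \<le> ennreal (A + 2 * B) + ennreal (A + 2 * B)"
    by (intro add_mono half)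
  also have "\<dots> = ennreal (2 * (A + 2 * B))"
    using A B by (simp add: ennreal_plus[symmetric] del: ennreal_plus)
  finally show ?thesis .
qed

lemma nn_integral_square_le:
  fixes E :: "real \<Rightarrow> real \<Rightarrow> ennreal"
  assumes "a \<le> b" and E_le: "\<And>s t. s \<in> {a..b} \<Longrightarrow> t \<in> {a..b} \<Longrightarrow> E s t \<le> ennreal K"
  shows "(\<integral>\<^sup>+t. (\<integral>\<^sup>+s. E s t * indicator {a..b} s * indicator {a..b} t \<partial>lborel) \<partial>lborel)
    \<le> ennreal (K * (b - a)\<^sup>2)"
proof -
  have "(\<integral>\<^sup>+t. (\<integral>\<^sup>+s. E s t * indicator {a..b} s * indicator {a..b} t \<partial>lborel) \<partial>lborel)
      \<le> (\<integral>\<^sup>+t. (\<integral>\<^sup>+s. ennreal K * indicator {a..b} s * indicator {a..b} t \<partial>lborel) \<partial>lborel)"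
    using E_le by (intro nn_integral_mono) (auto simp: indicator_def)
  also have "\<dots> = ennreal K * ennreal (b - a) * ennreal (b - a)"
    using \<open>a \<le> b\<close> by (simp add: nn_integral_multc nn_integral_cmult_indicator)
  also have "\<dots> = ennreal (K * (b - a)\<^sup>2)"
    using \<open>a \<le> b\<close> by (simp add: ennreal_mult''[symmetric] power2_eq_square mult.assoc)
  finally show ?thesis .
qed

lemma nn_integral_square_min_abs_powr_le:
  fixes E :: "real \<Rightarrow> real \<Rightarrow> ennreal"
  assumes A: "0 \<le> A" and B: "0 \<le> B" and e: "e \<le> -3/2" and "a \<le> b"
    and E_le: "\<And>s t. s \<in> {a..b} \<Longrightarrow> t \<in> {a..b} \<Longrightarrow> s \<noteq> t \<Longrightarrow> E s t \<le> ennreal (min A (B * \<bar>t - s\<bar> powr e))"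
  shows "(\<integral>\<^sup>+t. (\<integral>\<^sup>+s. E s t * indicator {a..b} s * indicator {a..b} t \<partial>lborel) \<partial>lborel)
    \<le> ennreal (2 * (A + 2 * B) * (b - a))"
proof -
  have inner: "(\<integral>\<^sup>+s. E s t * indicator {a..b} s * indicator {a..b} t \<partial>lborel)
      \<le> ennreal (2 * (A + 2 * B)) * indicator {a..b} t" for t
  proof -
    have "AE s in lborel. E s t * indicator {a..b} s * indicator {a..b} t
        \<le> ennreal (min A (B * \<bar>t - s\<bar> powr e)) * indicator {a..b} t"
      using AE_lborel_singleton[of t] by eventually_elim (auto simp: indicator_def E_le)
    then have "(\<integral>\<^sup>+s. E s t * indicator {a..b} s * indicator {a..b} t \<partial>lborel)
        \<le> (\<integral>\<^sup>+s. ennreal (min A (B * \<bar>t - s\<bar> powr e)) \<partial>lborel) * indicator {a..b} t"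
      by (subst nn_integral_multc[symmetric]) (auto intro: nn_integral_mono_AE)
    also have "\<dots> \<le> ennreal (2 * (A + 2 * B)) * indicator {a..b} t"
      by (intro mult_right_mono nn_integral_min_abs_powr_le A B e) auto
    finally show ?thesis .
  qed
  have "(\<integral>\<^sup>+t. (\<integral>\<^sup>+s. E s t * indicator {a..b} s * indicator {a..b} t \<partial>lborel) \<partial>lborel)
      \<le> (\<integral>\<^sup>+t. ennreal (2 * (A + 2 * B)) * indicator {a..b} t \<partial>lborel)"
    by (intro nn_integral_mono inner)
  also have "\<dots> = ennreal (2 * (A + 2 * B) * (b - a))"
    using A B \<open>a \<le> b\<close> by (simp add: nn_integral_cmult_indicator ennreal_mult'')
  finally show ?thesis .
qed

section \<open>The functional F_L\<close>

lemma F_L_eq_hold_at_0: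
  assumes "0 \<le> L"
  shows "F_L X L i j \<omega> = (\<integral>\<^sup>+t. (\<integral>\<^sup>+s. ball_energy (hold_at_0 (X i) s \<omega>) (hold_at_0 (X j) t \<omega>)
                                   * indicator {L/2..L} s * indicator {L/2..L} t \<partial>lborel) \<partial>lborel)"
  unfolding F_L_def ball_energy_def[symmetric]
proof (intro nn_integral_cong)
  fix s t :: real
  show "(\<integral>\<^sup>+s. ball_energy (X i s \<omega>) (X j t \<omega>) * indicator {L/2..L} s \<partial>lborel) * indicator {L/2..L} t =
     (\<integral>\<^sup>+s. ball_energy (hold_at_0 (X i) s \<omega>) (hold_at_0 (X j) t \<omega>) * indicator {L/2..L} s * indicator {L/2..L} t \<partial>lborel)"
    using assms
    by (cases "t \<in> {L/2..L}", simp_all add: nn_integral_multc[symmetric], intro nn_integral_cong)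
       (auto simp: hold_at_0_def max_def indicator_def)
qed

lemma borel_measurable_F_L:
  fixes X :: "nat \<Rightarrow> real \<Rightarrow> 'a \<Rightarrow> real^'d"
  assumes "brownian_motion P (X i) z\<^sub>i" "brownian_motion P (X j) z\<^sub>j" "0 \<le> L"
  shows "F_L X L i j \<in> borel_measurable P"
proof -
  have [measurable]: "case_prod (hold_at_0 (X i)) \<in> borel_measurable (borel \<Otimes>\<^sub>M P)"
      "case_prod (hold_at_0 (X j)) \<in> borel_measurable (borel \<Otimes>\<^sub>M P)"
    using assms by (auto intro: borel_measurable_hold_at_0_brownian)
  show ?thesis
    unfolding F_L_eq_hold_at_0[OF \<open>0 \<le> L\<close>] by measurable
qed

lemma nn_integral_F_L:
  fixes X :: "nat \<Rightarrow> real \<Rightarrow> 'a \<Rightarrow> real^'d"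
  assumes "prob_space P" and "brownian_motion P (X i) z\<^sub>i" "brownian_motion P (X j) z\<^sub>j" and L: "0 \<le> L"
  shows "(\<integral>\<^sup>+\<omega>. F_L X L i j \<omega> \<partial>P) = (\<integral>\<^sup>+t. (\<integral>\<^sup>+s. (\<integral>\<^sup>+\<omega>. ball_energy (X i s \<omega>) (X j t \<omega>) \<partial>P)
                                       * indicator {L/2..L} s * indicator {L/2..L} t \<partial>lborel) \<partial>lborel)"
proof -
  interpret P: prob_space P by fact
  interpret pair_sigma_finite P lborel ..
  have [measurable]: "case_prod (hold_at_0 (X i)) \<in> borel_measurable (borel \<Otimes>\<^sub>M P)"
      "case_prod (hold_at_0 (X j)) \<in> borel_measurable (borel \<Otimes>\<^sub>M P)"
    using assms by (auto intro: borel_measurable_hold_at_0_brownian)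
  have "(\<integral>\<^sup>+\<omega>. F_L X L i j \<omega> \<partial>P) =
      (\<integral>\<^sup>+t. (\<integral>\<^sup>+s. (\<integral>\<^sup>+\<omega>. ball_energy (hold_at_0 (X i) s \<omega>) (hold_at_0 (X j) t \<omega>)
                          * indicator {L/2..L} s * indicator {L/2..L} t \<partial>P) \<partial>lborel) \<partial>lborel)"
    unfolding F_L_eq_hold_at_0[OF L]
    by (subst Fubini', measurable, intro nn_integral_cong Fubini'[symmetric], measurable)
  also have "\<dots> = (\<integral>\<^sup>+t. (\<integral>\<^sup>+s. (\<integral>\<^sup>+\<omega>. ball_energy (X i s \<omega>) (X j t \<omega>) \<partial>P)
                                       * indicator {L/2..L} s * indicator {L/2..L} t \<partial>lborel) \<partial>lborel)"
    using L by (intro nn_integral_cong) (auto simp: hold_at_0_def max_def indicator_def)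
  finally show ?thesis .
qed

lemma nn_integral_F_L_diag_le:
  fixes X :: "nat \<Rightarrow> real \<Rightarrow> 'a \<Rightarrow> real^'d"
  defines "V \<equiv> unit_ball_vol (real CARD('d))"
    and "c\<^sub>0 \<equiv> unit_ball_vol (real CARD('d)) * (2 * pi) powr (- real CARD('d) / 2)"
  assumes d: "5 \<le> CARD('d)" and P: "prob_space P" and X: "brownian_motion P (X i) z" and L: "0 \<le> L"
  shows "(\<integral>\<^sup>+\<omega>. F_L X L i i \<omega> \<partial>P) \<le> ennreal (V * (1 + 8 * c\<^sub>0) * L)"
proof -
  have V: "0 \<le> V" and c\<^sub>0: "0 \<le> c\<^sub>0"
    unfolding V_def c\<^sub>0_def by auto
  have "(\<integral>\<^sup>+\<omega>. F_L X L i i \<omega> \<partial>P)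
      \<le> ennreal (2 * (V * (1 + 2 * c\<^sub>0) + 2 * (V * (3 * c\<^sub>0))) * (L - L / 2))"
    unfolding nn_integral_F_L[where X=X and i=i and j=i, OF P X X L]
  proof (rule nn_integral_square_min_abs_powr_le)
    show "1 - real CARD('d) / 2 \<le> -3/2"
      using d by simp
    fix s t assume "s \<in> {L/2..L}" "t \<in> {L/2..L}" "s \<noteq> t"
    then have "(\<integral>\<^sup>+\<omega>. ball_energy (X i s \<omega>) (X i t \<omega>) \<partial>P)
        \<le> ennreal (V * min (1 + 2 * c\<^sub>0) (3 * c\<^sub>0 * \<bar>t - s\<bar> powr (1 - real CARD('d) / 2)))"
      unfolding V_def c\<^sub>0_def using d L by (intro nn_integral_ball_energy_brownian_le[OF _ X]) auto
    then show "(\<integral>\<^sup>+\<omega>. ball_energy (X i s \<omega>) (X i t \<omega>) \<partial>P)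
        \<le> ennreal (min (V * (1 + 2 * c\<^sub>0)) (V * (3 * c\<^sub>0) * \<bar>t - s\<bar> powr (1 - real CARD('d) / 2)))"
      using V by (simp add: min_mult_distrib_left mult.assoc)
  qed (use V c\<^sub>0 L in auto)
  also have "\<dots> = ennreal (V * (1 + 8 * c\<^sub>0) * L)"
    by (simp add: algebra_simps)
  finally show ?thesis .
qed

lemma nn_integral_F_L_offdiag_le:
  fixes X :: "nat \<Rightarrow> real \<Rightarrow> 'a \<Rightarrow> real^'d"
  defines "V \<equiv> unit_ball_vol (real CARD('d))"
    and "c\<^sub>0 \<equiv> unit_ball_vol (real CARD('d)) * (2 * pi) powr (- real CARD('d) / 2)"
  assumes d: "3 \<le> CARD('d)" and P: "prob_space P" and X: "\<And>i. brownian_motion P (X i) (z i)"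
    and indep: "prob_space.indep_vars P (\<lambda>_. Pi\<^sub>M {0..} (\<lambda>_. borel)) (\<lambda>i \<omega>. restrict (\<lambda>t. X i t \<omega>) {0..}) UNIV"
    and "i \<noteq> j" and L: "0 < L"
  shows "(\<integral>\<^sup>+\<omega>. F_L X L i j \<omega> \<partial>P) \<le> ennreal (3 * V * c\<^sub>0 * (L / 2) powr (3 - real CARD('d) / 2))"
proof -
  define e where "e = 1 - real CARD('d) / 2"
  have "(\<integral>\<^sup>+\<omega>. F_L X L i j \<omega> \<partial>P) \<le> ennreal (V * (3 * c\<^sub>0 * (L / 2) powr e) * (L - L / 2)\<^sup>2)"
    unfolding nn_integral_F_L[OF P X[of i] X[of j] less_imp_le[OF L]]
  proof (rule nn_integral_square_le)
    fix s t assume s: "s \<in> {L/2..L}" and t: "t \<in> {L/2..L}"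
    have "(\<integral>\<^sup>+\<omega>. ball_energy (X i s \<omega>) (X j t \<omega>) \<partial>P) \<le> ennreal (V * (3 * c\<^sub>0 * s powr e))"
      unfolding V_def c\<^sub>0_def e_def using s t L \<open>i \<noteq> j\<close>
      by (intro nn_integral_ball_energy_indep_le[OF P d X[of i]] indep_var_path_values[OF P indep]) auto
    also have "\<dots> \<le> ennreal (V * (3 * c\<^sub>0 * (L / 2) powr e))"
      unfolding V_def c\<^sub>0_def e_def using s L d
      by (intro ennreal_leI mult_left_mono powr_mono2') auto
    finally show "(\<integral>\<^sup>+\<omega>. ball_energy (X i s \<omega>) (X j t \<omega>) \<partial>P) \<le> ennreal (V * (3 * c\<^sub>0 * (L / 2) powr e))" .
  qed (use L in auto)
  also have "V * (3 * c\<^sub>0 * (L / 2) powr e) * (L - L / 2)\<^sup>2 = 3 * V * c\<^sub>0 * ((L / 2) powr e * (L / 2) powr 2)"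
    using L by (simp add: powr_numeral)
  also have "\<dots> = 3 * V * c\<^sub>0 * (L / 2) powr (3 - real CARD('d) / 2)"
    by (simp add: e_def powr_add[symmetric])
  finally show ?thesis .
qed

lemma nn_integral_F_L_le:
  fixes X :: "nat \<Rightarrow> real \<Rightarrow> 'a \<Rightarrow> real^'d"
  defines "V \<equiv> unit_ball_vol (real CARD('d))"
    and "c\<^sub>0 \<equiv> unit_ball_vol (real CARD('d)) * (2 * pi) powr (- real CARD('d) / 2)"
  assumes d: "5 \<le> CARD('d)" and P: "prob_space P" and X: "\<And>i. brownian_motion P (X i) (z i)"
    and indep: "prob_space.indep_vars P (\<lambda>_. Pi\<^sub>M {0..} (\<lambda>_. borel)) (\<lambda>i \<omega>. restrict (\<lambda>t. X i t \<omega>) {0..}) UNIV"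
    and L: "0 < L"
  shows "(\<integral>\<^sup>+\<omega>. F_L X L i j \<omega> \<partial>P) \<le> ennreal ((if i = j then V * (1 + 8 * c\<^sub>0) * L else 0)
           + 3 * V * c\<^sub>0 * 2 powr (real CARD('d) / 2 - 3) * L powr (3 - real CARD('d) / 2))"
proof -
  have offdiag_nonneg: "0 \<le> 3 * V * c\<^sub>0 * 2 powr (real CARD('d) / 2 - 3) * L powr (3 - real CARD('d) / 2)"
    unfolding V_def c\<^sub>0_def by auto
  show ?thesis
  proof (cases "i = j")
    case True
    have "(\<integral>\<^sup>+\<omega>. F_L X L i i \<omega> \<partial>P) \<le> ennreal (V * (1 + 8 * c\<^sub>0) * L)"
      unfolding V_def c\<^sub>0_def using L by (intro nn_integral_F_L_diag_le[OF d P X]) auto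
    also have "\<dots> \<le> ennreal (V * (1 + 8 * c\<^sub>0) * L
        + 3 * V * c\<^sub>0 * 2 powr (real CARD('d) / 2 - 3) * L powr (3 - real CARD('d) / 2))"
      using offdiag_nonneg by (intro ennreal_leI) simp
    finally show ?thesis
      using True by simp
  next
    case False
    have "2 powr (real CARD('d) / 2 - 3) = 1 / 2 powr (3 - real CARD('d) / 2)"
      by (subst powr_minus_divide[symmetric]) simp
    then have "(L / 2) powr (3 - real CARD('d) / 2) = 2 powr (real CARD('d) / 2 - 3) * L powr (3 - real CARD('d) / 2)"
      by (simp add: powr_divide)
    moreover have "(\<integral>\<^sup>+\<omega>. F_L X L i j \<omega> \<partial>P) \<le> ennreal (3 * V * c\<^sub>0 * (L / 2) powr (3 - real CARD('d) / 2))"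
      unfolding V_def c\<^sub>0_def using d False L by (intro nn_integral_F_L_offdiag_le[OF _ P X indep]) auto
    ultimately show ?thesis
      using False by (simp add: mult_ac)
  qed
qed

lemma nn_integral_sum_F_L_le:
  fixes X :: "nat \<Rightarrow> real \<Rightarrow> 'a \<Rightarrow> real^'d"
  defines "V \<equiv> unit_ball_vol (real CARD('d))"
    and "c\<^sub>0 \<equiv> unit_ball_vol (real CARD('d)) * (2 * pi) powr (- real CARD('d) / 2)"
  assumes d: "5 \<le> CARD('d)" and P: "prob_space P" and X: "\<And>i. brownian_motion P (X i) (z i)"
    and indep: "prob_space.indep_vars P (\<lambda>_. Pi\<^sub>M {0..} (\<lambda>_. borel)) (\<lambda>i \<omega>. restrict (\<lambda>t. X i t \<omega>) {0..}) UNIV"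
    and L: "0 < L" and "finite I"
  shows "(\<integral>\<^sup>+\<omega>. (\<Sum>i\<in>I. \<Sum>j\<in>I. F_L X L i j \<omega>) \<partial>P) \<le> ennreal (real (card I) * (V * (1 + 8 * c\<^sub>0) * L)
    + (real (card I))\<^sup>2 * (3 * V * c\<^sub>0 * 2 powr (real CARD('d) / 2 - 3) * L powr (3 - real CARD('d) / 2)))"
proof -
  have [measurable]: "F_L X L i j \<in> borel_measurable P" for i j
    using borel_measurable_F_L[OF X X] L by simp
  have "(\<integral>\<^sup>+\<omega>. (\<Sum>i\<in>I. \<Sum>j\<in>I. F_L X L i j \<omega>) \<partial>P) = (\<Sum>i\<in>I. \<Sum>j\<in>I. \<integral>\<^sup>+\<omega>. F_L X L i j \<omega> \<partial>P)"
    by (subst nn_integral_sum, measurable, intro sum.cong refl nn_integral_sum, measurable)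
  also have "\<dots> \<le> ennreal (real (card I) * (V * (1 + 8 * c\<^sub>0) * L)
    + (real (card I))\<^sup>2 * (3 * V * c\<^sub>0 * 2 powr (real CARD('d) / 2 - 3) * L powr (3 - real CARD('d) / 2)))"
    unfolding V_def c\<^sub>0_def using \<open>finite I\<close> L
    by (intro sum_sum_diagonal_le nn_integral_F_L_le[OF d P X indep]) auto
  finally show ?thesis .
qed

theorem lemma2p2:
  assumes "CARD('d) \<ge> 5"
  shows "\<exists>C::real. \<forall>(P::'a measure) (X::nat \<Rightarrow> real \<Rightarrow> 'a \<Rightarrow> real ^ 'd) (z::nat \<Rightarrow> real ^ 'd).
           prob_space P \<and>
           (\<forall>i. brownian_motion P (X i) (z i)) \<and>
           prob_space.indep_vars P (\<lambda>_. Pi\<^sub>M {0..} (\<lambda>_. borel))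
              (\<lambda>i \<omega>. restrict (\<lambda>t. X i t \<omega>) {0..}) UNIV
           \<longrightarrow> (\<forall>(M::nat) (L::real). M \<ge> 1 \<and> L \<ge> 2 \<longrightarrow>
                 (\<integral>\<^sup>+ \<omega>. (\<Sum>i\<in>{1..M}. \<Sum>j\<in>{1..M}. F_L X L i j \<omega>) \<partial>P)
                 \<le> ennreal (C * (real M * L + (real M)\<^sup>2 * L powr (3 - real CARD('d) / 2))))"
proof -
  define V c\<^sub>0 where "V = unit_ball_vol (real CARD('d))"
    and "c\<^sub>0 = unit_ball_vol (real CARD('d)) * (2 * pi) powr (- real CARD('d) / 2)"
  define C\<^sub>1 C\<^sub>2 where "C\<^sub>1 = V * (1 + 8 * c\<^sub>0)" and "C\<^sub>2 = 3 * V * c\<^sub>0 * 2 powr (real CARD('d) / 2 - 3)"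
  have "0 \<le> C\<^sub>1" "0 \<le> C\<^sub>2"
    unfolding C\<^sub>1_def C\<^sub>2_def V_def c\<^sub>0_def by auto
  show ?thesis
  proof (intro exI[of _ "C\<^sub>1 + C\<^sub>2"] allI impI, elim conjE)
    fix P :: "'a measure" and X :: "nat \<Rightarrow> real \<Rightarrow> 'a \<Rightarrow> real ^ 'd" and z M and L :: real
    assume "prob_space P" "\<forall>i. brownian_motion P (X i) (z i)" "2 \<le> L"
      "prob_space.indep_vars P (\<lambda>_. Pi\<^sub>M {0..} (\<lambda>_. borel)) (\<lambda>i \<omega>. restrict (\<lambda>t. X i t \<omega>) {0..}) UNIV"
    then have "(\<integral>\<^sup>+\<omega>. (\<Sum>i\<in>{1..M}. \<Sum>j\<in>{1..M}. F_L X L i j \<omega>) \<partial>P)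
        \<le> ennreal (real M * (C\<^sub>1 * L) + (real M)\<^sup>2 * (C\<^sub>2 * L powr (3 - real CARD('d) / 2)))"
      using nn_integral_sum_F_L_le[OF assms, of P X z L "{1..M}"]
      unfolding C\<^sub>1_def C\<^sub>2_def V_def c\<^sub>0_def by (simp add: mult_ac)
    also have "\<dots> \<le> ennreal ((C\<^sub>1 + C\<^sub>2) * (real M * L + (real M)\<^sup>2 * L powr (3 - real CARD('d) / 2)))"
      using \<open>0 \<le> C\<^sub>1\<close> \<open>0 \<le> C\<^sub>2\<close> \<open>2 \<le> L\<close> by (intro ennreal_leI) (simp add: algebra_simps)
    finally show "(\<integral>\<^sup>+\<omega>. (\<Sum>i\<in>{1..M}. \<Sum>j\<in>{1..M}. F_L X L i j \<omega>) \<partial>P)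
        \<le> ennreal ((C\<^sub>1 + C\<^sub>2) * (real M * L + (real M)\<^sup>2 * L powr (3 - real CARD('d) / 2)))" .
  qed
qed

end
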